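(* Let $\varepsilon>0$ and let $f(z,\omega)=\sum_{n=0}^{+\infty}\xi_n(\omega)a_nz^n$, where $(\xi_n)$ are independent standard complex gaussian random variables and $a_n\in\mathbb{C}$ satisfy $\#\{n\colon a_n\neq0\}=+\infty$, $\varlimsup_{n\to+\infty}\sqrt[n]{|a_n|}=0$ and $a_0\neq0$. Then there exists a set $E\subset(1;+\infty)$ of finite logarithmic measure such that for all $r\in(1;+\infty)\setminus E$, $$p_0(r)\le s(r)+N(r)\exp\{(2+\varepsilon)\sqrt{\ln N(r)}\}.$$
   Context: A standard complex gaussian random variable has density $\frac1\pi e^{-|z|^2}$ on $\mathbb{C}$. $n_f(r,\omega)$ is the number of zeros of $z\mapsto f(z,\omega)$ in the disc $\{|z|<r\}$, and $p_0(r)=\ln^-P\{\omega\colon n_f(r,\omega)=0\}=-\ln P\{\omega\colon n_f(r,\omega)=0\}$. $N(r)=\#\{n\colon\ln(|a_n|r^n)>0\}$ and $s(r)=2\sum_{n\colon\ln(|a_n|r^n)>0}\ln(|a_n|r^n)$. A set $E\subset(1,+\infty)$ has finite logarithmic measure if $\int_E\frac{dr}{r}<+\infty$. *)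

theory Defs
  imports "HOL-Probability.Probability"
begin

definition std_complex_gaussian :: "'w measure \<Rightarrow> ('w \<Rightarrow> complex) \<Rightarrow> bool" where
  "std_complex_gaussian M X \<longleftrightarrow>
     distributed M lborel X (\<lambda>z. ennreal (exp (- (cmod z)\<^sup>2) / pi))"

definition gaf :: "(nat \<Rightarrow> complex) \<Rightarrow> (nat \<Rightarrow> 'w \<Rightarrow> complex) \<Rightarrow> 'w \<Rightarrow> complex \<Rightarrow> complex" where
  "gaf a \<xi> \<omega> z = (\<Sum>n. \<xi> n \<omega> * a n * z ^ n)"

text \<open>p_0(r) = -ln P{omega : n_f(r,omega) = 0}; the event n_f(r,omega)=0 is the event that
  z \<mapsto> f(z,omega) has no zero in the open disc |z| < r.\<close>
definition p0 :: "'w measure \<Rightarrow> (nat \<Rightarrow> complex) \<Rightarrow> (nat \<Rightarrow> 'w \<Rightarrow> complex) \<Rightarrow> real \<Rightarrow> real" where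
  "p0 M a \<xi> r = - ln (measure M {\<omega> \<in> space M. \<forall>z. cmod z < r \<longrightarrow> gaf a \<xi> \<omega> z \<noteq> 0})"

definition Nset :: "(nat \<Rightarrow> complex) \<Rightarrow> real \<Rightarrow> nat set" where
  "Nset a r = {n. ln (cmod (a n) * r ^ n) > 0}"

definition NN :: "(nat \<Rightarrow> complex) \<Rightarrow> real \<Rightarrow> nat" where
  "NN a r = card (Nset a r)"

definition ss :: "(nat \<Rightarrow> complex) \<Rightarrow> real \<Rightarrow> real" where
  "ss a r = 2 * (\<Sum>n\<in>Nset a r. ln (cmod (a n) * r ^ n))"

definition finite_log_measure :: "real set \<Rightarrow> bool" where
  "finite_log_measure E \<longleftrightarrow> E \<in> sets lborel \<and>
     (\<integral>\<^sup>+ r. indicator E r / ennreal r \<partial>lborel) < \<infinity>"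

end

theory Submission
  imports Defs "HOL-Real_Asymp.Real_Asymp"
begin

text \<open>
  For radii \<open>t\<^sub>n > 0\<close>, on the event \<open>|\<xi>\<^sub>0 a\<^sub>0| \<ge> 2\<close>, \<open>|\<xi>\<^sub>n| \<le> t\<^sub>n\<close> (\<open>n \<ge> 1\<close>) the constant term of
  \<open>f\<close> dominates the rest on \<open>|z| < r\<close> as soon as \<open>\<Sum> t\<^sub>n |a\<^sub>n| r\<^sup>n \<le> 1\<close>, so \<open>f\<close> has no zero there. By
  independence the probability of this event is a product of gaussian small-ball probabilities,
  and \<open>-ln P(|\<xi>| \<le> t)\<close> is about \<open>2 ln (1/t)\<close> for small \<open>t\<close> and about \<open>1/t\<^sup>2\<close> for large \<open>t\<close>.
  The indices with \<open>|a\<^sub>n| (r/(1-h))\<^sup>n > 1\<close> get \<open>t\<^sub>n \<approx> 1/(7 N |a\<^sub>n| r\<^sup>n)\<close> and cost \<open>s(r) + O(N ln N)\<close>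
  in total; for the others \<open>|a\<^sub>n| r\<^sup>n \<le> e\<^sup>-\<^sup>n\<^sup>h\<close>, which allows radii growing like \<open>e\<^sup>n\<^sup>h\<^sup>/\<^sup>2\<close> at a
  total cost \<open>O(ln\<^sup>2 N / h)\<close>. A Borel-type lemma shows that outside a set of finite logarithmic
  measure one can take \<open>1/h \<le> N(r)\<close> with \<open>N(r/(1-h)) \<le> 4 N(r)\<close>, so that
  \<open>p\<^sub>0(r) \<le> s(r) + O(N ln\<^sup>2 N)\<close>, and \<open>N ln\<^sup>2 N = o(N exp (2 \<surd>(ln N)))\<close>.
\<close>

lemma ln_one_plus_le_powr_div:
  fixes y p :: real
  assumes "0 \<le> y" "0 < p" "p \<le> 1"
  shows "ln (1 + y) \<le> y powr p / p"
proof (cases "y = 0")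
  case False
  with assms have "0 < y" by simp
  have "(1 + y) powr p = (1 + y) powr (p - 1) * (1 + y)"
    using assms by (simp add: powr_diff)
  also have "\<dots> = (1 + y) powr (p - 1) + y * (1 + y) powr (p - 1)"
    by (simp add: algebra_simps)
  also have "\<dots> \<le> 1 + y * y powr (p - 1)"
    using assms \<open>0 < y\<close> powr_mono2'[of "p - 1" 1 "1 + y"] powr_mono2'[of "p - 1" y "1 + y"]
    by (intro add_mono mult_left_mono) auto
  also have "y * y powr (p - 1) = y powr p"
    using \<open>0 < y\<close> by (simp add: powr_diff)
  finally have "ln ((1 + y) powr p) \<le> ln (1 + y powr p)"
    using assms by (intro ln_mono) auto
  also have "\<dots> \<le> y powr p"
    by (rule ln_add_one_self_le_self) simp
  finally show ?thesis
    using assms by (simp add: ln_powr field_simps)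
qed simp

lemma exp_neg_mult_sums:
  assumes "0 < y"
  shows "(\<lambda>n. exp (- (real n * y))) sums (1 / (1 - exp (- y)))"
  using geometric_sums[of "exp (- y)"] assms by (simp add: exp_of_nat_mult[symmetric])

lemma suminf_exp_neg_mult_le:
  assumes "0 < y"
  shows "(\<Sum>n. exp (- (real n * y))) \<le> 1 + 1 / y"
proof -
  have "exp (- y) \<le> 1 / (1 + y)"
    using exp_ge_add_one_self[of y] assms by (simp add: exp_minus field_simps)
  then have "y / (1 + y) \<le> 1 - exp (- y)"
    using assms by (simp add: field_simps)
  then have "1 / (1 - exp (- y)) \<le> 1 / (y / (1 + y))"
    using assms by (intro divide_left_mono mult_pos_pos) auto
  then show ?thesis
    using sums_unique[OF exp_neg_mult_sums[OF assms]] assms by (simp add: field_simps)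
qed

lemma sum_bound_finite_plus_geometric:
  fixes f :: "nat \<Rightarrow> real"
  assumes "finite S" "0 < y" "0 \<le> \<delta>" "\<And>n. 0 \<le> f n"
    and "\<And>n. n \<in> S \<Longrightarrow> f n \<le> \<delta>" "\<And>n. n \<notin> S \<Longrightarrow> f n \<le> \<delta> * exp (- (real n * y))"
  shows "summable f" "(\<Sum>n. f n) \<le> \<delta> * (real (card S) + 1 + 1 / y)"
proof -
  define g where "g n = (if n \<in> S then \<delta> else 0) + \<delta> * exp (- (real n * y))" for n
  have "(\<lambda>n. if n \<in> S then \<delta> else 0) sums (\<delta> * card S)"
    using sums_If_finite_set[OF assms(1), of "\<lambda>_. \<delta>"] by (simp add: mult.commute)
  moreover have "(\<lambda>n. \<delta> * exp (- (real n * y))) sums (\<delta> * (\<Sum>n. exp (- (real n * y))))"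
    using exp_neg_mult_sums[OF assms(2)] by (intro sums_mult) (simp add: sums_iff)
  ultimately have g: "g sums (\<delta> * card S + \<delta> * (\<Sum>n. exp (- (real n * y))))"
    unfolding g_def by (rule sums_add)
  then have "summable g"
    by (simp add: sums_iff)
  have f_le_g: "f n \<le> g n" for n
  proof -
    have "0 \<le> \<delta> * exp (- (real n * y))"
      using assms(3) by simp
    then show ?thesis
      using assms(5,6)[of n] by (cases "n \<in> S") (simp_all add: g_def)
  qed
  show "summable f"
  proof (rule summable_comparison_test'[OF \<open>summable g\<close>])
    fix n
    show "norm (f n) \<le> g n"
      using assms(4)[of n] f_le_g[of n] by simp
  qed
  then have "(\<Sum>n. f n) \<le> (\<Sum>n. g n)"
    using \<open>summable g\<close> f_le_g by (intro suminf_le) auto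
  also have "\<dots> = \<delta> * card S + \<delta> * (\<Sum>n. exp (- (real n * y)))"
    using g by (simp add: sums_iff)
  also have "\<dots> \<le> \<delta> * card S + \<delta> * (1 + 1 / y)"
    using assms(2,3) by (intro add_left_mono mult_left_mono suminf_exp_neg_mult_le) auto
  finally show "(\<Sum>n. f n) \<le> \<delta> * (real (card S) + 1 + 1 / y)"
    by (simp add: algebra_simps)
qed

lemma partial_sums_Suc_le_sum_plus_suminf:
  fixes f q e :: "nat \<Rightarrow> real"
  assumes "finite S" "summable e" "\<And>n. 0 \<le> q n" "\<And>n. 0 \<le> e n"
    and "\<And>n. f n \<le> (if n \<in> S then q n else 0) + e n"
  shows "(\<Sum>n<m. f (Suc n)) \<le> (\<Sum>n\<in>S. q n) + (\<Sum>n. e n)"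
proof -
  define g where "g n = (if n \<in> S then q n else 0) + e n" for n
  have "(\<Sum>n<m. f (Suc n)) \<le> (\<Sum>n<m. g (Suc n))"
    using assms(5) by (intro sum_mono) (simp add: g_def)
  also have "\<dots> \<le> (\<Sum>n<Suc m. g n)"
    unfolding sum.lessThan_Suc_shift using assms(3,4)[of 0] by (simp add: g_def)
  also have "\<dots> = (\<Sum>n\<in>{..<Suc m} \<inter> S. q n) + (\<Sum>n<Suc m. e n)"
    by (simp add: g_def sum.distrib sum.inter_restrict)
  also have "\<dots> \<le> (\<Sum>n\<in>S. q n) + (\<Sum>n. e n)"
    using assms(1-4) by (intro add_mono sum_mono2 sum_le_suminf) auto
  finally show ?thesis .
qed

lemma suminf_nonzero_if_head_dominates:
  fixes u :: "nat \<Rightarrow> 'a::banach"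
  assumes "summable (\<lambda>n. norm (u (Suc n)))" "(\<Sum>n. norm (u (Suc n))) < norm (u 0)"
  shows "(\<Sum>n. u n) \<noteq> 0"
proof
  assume "(\<Sum>n. u n) = 0"
  have "summable u"
    using summable_norm_cancel[OF assms(1)] by (simp add: summable_Suc_iff)
  then have "u 0 = - (\<Sum>n. u (Suc n))"
    using suminf_split_head[of u] \<open>(\<Sum>n. u n) = 0\<close> by simp
  then have "norm (u 0) \<le> (\<Sum>n. norm (u (Suc n)))"
    using summable_norm[OF assms(1)] by simp
  with assms(2) show False
    by simp
qed

lemma eventually_counting_bound_le:
  fixes C \<epsilon> :: real
  assumes "0 < \<epsilon>"
  shows "eventually (\<lambda>x. C + 4 * x * (2 * ln (7 * x) + 1) + 32 * exp 2 * x * (ln (7 * x))\<^sup>2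
    \<le> x * exp ((2 + \<epsilon>) * sqrt (ln x))) at_top"
proof -
  have "((\<lambda>x::real. (4 * (2 * ln (7 * x) + 1) + 32 * exp 2 * (ln (7 * x))\<^sup>2) / exp (2 * sqrt (ln x))) \<longlongrightarrow> 0) at_top"
    by real_asymp
  then have "eventually (\<lambda>x. (4 * (2 * ln (7 * x) + 1) + 32 * exp 2 * (ln (7 * x))\<^sup>2)
      < exp (2 * sqrt (ln x)) / 2) at_top"
    by (rule order_tendstoD(2)[of _ 0 _ "1/2", THEN eventually_mono]) (simp_all add: field_simps)
  moreover have "filterlim (\<lambda>x::real. x * exp (2 * sqrt (ln x))) at_top at_top"
    by real_asymp
  then have "eventually (\<lambda>x. 2 * C \<le> x * exp (2 * sqrt (ln x))) at_top"
    by (simp add: filterlim_at_top)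
  moreover have "eventually (\<lambda>x::real. 1 \<le> x) at_top"
    by (rule eventually_ge_at_top)
  ultimately show ?thesis
  proof eventually_elim
    case (elim x)
    define Q where "Q = 4 * (2 * ln (7 * x) + 1) + 32 * exp 2 * (ln (7 * x))\<^sup>2"
    define E where "E = exp (2 * sqrt (ln x))"
    have "x * Q \<le> x * (E / 2)" "C \<le> x * E / 2"
      using elim by (auto simp: Q_def E_def intro!: mult_left_mono)
    moreover have "x * E \<le> x * exp ((2 + \<epsilon>) * sqrt (ln x))"
      using \<open>0 < \<epsilon>\<close> elim(3) by (auto simp: E_def intro!: mult_left_mono mult_right_mono)
    ultimately show ?case
      by (simp add: Q_def algebra_simps)
  qed
qed

section \<open>Small balls for a standard complex gaussian\<close>

lemma std_complex_gaussian_measurable: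
  "std_complex_gaussian M X \<Longrightarrow> X \<in> borel_measurable M"
  unfolding std_complex_gaussian_def by (auto dest: distributed_measurable)

lemma std_complex_gaussian_prob_ball_ge:
  fixes X :: "'w \<Rightarrow> complex"
  assumes "prob_space M" and G: "std_complex_gaussian M X" and "0 < \<rho>"
  shows "\<rho>\<^sup>2 * exp (- (cmod c + \<rho>)\<^sup>2) \<le> measure M {\<omega>\<in>space M. X \<omega> \<in> ball c \<rho>}"
proof -
  interpret prob_space M by fact
  let ?f = "\<lambda>z::complex. ennreal (exp (- (cmod z)\<^sup>2) / pi)"
  let ?k = "exp (- (cmod c + \<rho>)\<^sup>2) / pi"
  have "ennreal (\<rho>\<^sup>2 * exp (- (cmod c + \<rho>)\<^sup>2)) = ennreal ?k * emeasure lborel (ball c \<rho>)"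
    using \<open>0 < \<rho>\<close> by (simp add: emeasure_ball unit_ball_vol_2 ennreal_mult[symmetric] field_simps)
  also have "\<dots> = (\<integral>\<^sup>+z. ennreal ?k * indicator (ball c \<rho>) z \<partial>lborel)"
    by (rule nn_integral_cmult_indicator[symmetric]) simp
  also have "\<dots> \<le> (\<integral>\<^sup>+z. ?f z * indicator (ball c \<rho>) z \<partial>lborel)"
  proof (intro nn_integral_mono)
    fix z :: complex
    have "cmod z \<le> cmod c + cmod (c - z)"
      using norm_triangle_sub[of z c] by (simp add: norm_minus_commute)
    then have "z \<in> ball c \<rho> \<Longrightarrow> (cmod z)\<^sup>2 \<le> (cmod c + \<rho>)\<^sup>2"
      by (intro power_mono) (auto simp: dist_norm)
    then show "ennreal ?k * indicator (ball c \<rho>) z \<le> ?f z * indicator (ball c \<rho>) z"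
      by (auto simp: indicator_def intro!: ennreal_leI divide_right_mono)
  qed
  also have "\<dots> = emeasure M (X -` ball c \<rho> \<inter> space M)"
    using G unfolding std_complex_gaussian_def by (intro distributed_emeasure[symmetric]) auto
  finally show ?thesis
    by (simp add: emeasure_eq_measure vimage_def Int_def conj_commute)
qed

text \<open>The density of a standard complex gaussian, rescaled by \<open>\<surd>2\<close>, has total mass \<open>2\<close>;
  this gives a gaussian tail bound without computing the distribution of \<open>|X|\<close>.\<close>
lemma nn_integral_exp_neg_half_norm_sq:
  fixes X :: "'w \<Rightarrow> complex"
  assumes "prob_space M" and G: "std_complex_gaussian M X"
  shows "(\<integral>\<^sup>+z. ennreal (exp (- (cmod z)\<^sup>2 / 2) / pi) \<partial>lborel) = 2"
proof -
  interpret prob_space M by fact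
  let ?f = "\<lambda>z::complex. ennreal (exp (- (cmod z)\<^sup>2) / pi)"
  have total: "(\<integral>\<^sup>+z. ?f z \<partial>lborel) = 1"
    using distributed_emeasure[OF G[unfolded std_complex_gaussian_def], of UNIV]
    by (simp add: emeasure_space_1)
  have "(lborel::complex measure) = density (distr lborel borel (\<lambda>x. 0 + sqrt 2 *\<^sub>R x)) (\<lambda>_. \<bar>sqrt 2\<bar>^DIM(complex))"
    by (rule lborel_affine) simp
  then have "(\<integral>\<^sup>+z. ennreal (exp (- (cmod z)\<^sup>2 / 2) / pi) \<partial>lborel)
      = (\<integral>\<^sup>+z. ennreal (exp (- (cmod z)\<^sup>2 / 2) / pi)
           \<partial>density (distr lborel borel (\<lambda>x. 0 + sqrt 2 *\<^sub>R x)) (\<lambda>_. \<bar>sqrt 2\<bar>^DIM(complex)))"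
    by (rule arg_cong)
  also have "\<dots> = (\<integral>\<^sup>+x. ennreal 2 * ennreal (exp (- (cmod (sqrt 2 *\<^sub>R x))\<^sup>2 / 2) / pi) \<partial>lborel)"
    by (simp add: nn_integral_density nn_integral_distr)
  also have "\<dots> = (\<integral>\<^sup>+x. 2 * ?f x \<partial>lborel)"
    by (simp add: power_mult_distrib)
  also have "\<dots> = 2"
    by (simp add: nn_integral_cmult total)
  finally show ?thesis .
qed

lemma std_complex_gaussian_prob_norm_gt_le:
  fixes X :: "'w \<Rightarrow> complex"
  assumes "prob_space M" and G: "std_complex_gaussian M X" and "0 \<le> t"
  shows "measure M {\<omega>\<in>space M. t < cmod (X \<omega>)} \<le> 2 * exp (- t\<^sup>2 / 2)"
proof -
  interpret prob_space M by fact
  let ?A = "{z::complex. t < cmod z}"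
  have "emeasure M (X -` ?A \<inter> space M) = (\<integral>\<^sup>+z. ennreal (exp (- (cmod z)\<^sup>2) / pi) * indicator ?A z \<partial>lborel)"
    using G unfolding std_complex_gaussian_def by (intro distributed_emeasure) auto
  also have "\<dots> \<le> (\<integral>\<^sup>+z. ennreal (exp (- t\<^sup>2 / 2)) * ennreal (exp (- (cmod z)\<^sup>2 / 2) / pi) \<partial>lborel)"
  proof (intro nn_integral_mono)
    fix z :: complex
    have "z \<in> ?A \<Longrightarrow> t\<^sup>2 \<le> (cmod z)\<^sup>2"
      using \<open>0 \<le> t\<close> by (auto intro!: power_mono)
    then have "z \<in> ?A \<Longrightarrow> exp (- (cmod z)\<^sup>2) \<le> exp (- t\<^sup>2 / 2) * exp (- (cmod z)\<^sup>2 / 2)"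
      by (auto simp: exp_add[symmetric])
    then show "ennreal (exp (- (cmod z)\<^sup>2) / pi) * indicator ?A z
        \<le> ennreal (exp (- t\<^sup>2 / 2)) * ennreal (exp (- (cmod z)\<^sup>2 / 2) / pi)"
      by (auto simp: indicator_def ennreal_mult[symmetric] intro!: ennreal_leI divide_right_mono)
  qed
  also have "\<dots> = ennreal (2 * exp (- t\<^sup>2 / 2))"
    using nn_integral_exp_neg_half_norm_sq[OF assms(1,2)]
    by (simp add: nn_integral_cmult ennreal_mult mult.commute)
  finally show ?thesis
    by (simp add: emeasure_eq_measure vimage_def Int_def conj_commute)
qed

lemma std_complex_gaussian_prob_norm_le_ge:
  fixes X :: "'w \<Rightarrow> complex"
  assumes "prob_space M" and G: "std_complex_gaussian M X" and "0 < t" "t \<le> 1"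
  shows "t\<^sup>2 / exp 1 \<le> measure M {\<omega>\<in>space M. cmod (X \<omega>) \<le> t}"
proof -
  interpret prob_space M by fact
  note [measurable] = std_complex_gaussian_measurable[OF G]
  have "exp (-1) \<le> exp (- t\<^sup>2)"
    using assms(3,4) by (simp add: power_le_one)
  then have "t\<^sup>2 * exp (-1) \<le> t\<^sup>2 * exp (- (cmod 0 + t)\<^sup>2)"
    by (simp add: mult_left_mono)
  then have "t\<^sup>2 / exp 1 \<le> t\<^sup>2 * exp (- (cmod 0 + t)\<^sup>2)"
    by (simp add: exp_minus field_simps)
  also have "\<dots> \<le> measure M {\<omega>\<in>space M. X \<omega> \<in> ball 0 t}"
    by (rule std_complex_gaussian_prob_ball_ge[OF assms(1,2,3)])
  also have "\<dots> \<le> measure M {\<omega>\<in>space M. cmod (X \<omega>) \<le> t}"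
    by (intro finite_measure_mono) auto
  finally show ?thesis .
qed

lemma std_complex_gaussian_prob_norm_le_pos:
  fixes X :: "'w \<Rightarrow> complex"
  assumes "prob_space M" and G: "std_complex_gaussian M X" and "0 < t"
  shows "0 < measure M {\<omega>\<in>space M. cmod (X \<omega>) \<le> t}"
proof -
  interpret prob_space M by fact
  note [measurable] = std_complex_gaussian_measurable[OF G]
  have "0 < (min t 1)\<^sup>2 / exp 1"
    using \<open>0 < t\<close> by simp
  also have "\<dots> \<le> measure M {\<omega>\<in>space M. cmod (X \<omega>) \<le> min t 1}"
    using \<open>0 < t\<close> by (intro std_complex_gaussian_prob_norm_le_ge[OF assms(1,2)]) auto
  also have "\<dots> \<le> measure M {\<omega>\<in>space M. cmod (X \<omega>) \<le> t}"
    by (intro finite_measure_mono) auto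
  finally show ?thesis .
qed

lemma std_complex_gaussian_prob_norm_ge_ge:
  fixes X :: "'w \<Rightarrow> complex"
  assumes "prob_space M" and G: "std_complex_gaussian M X" and "0 \<le> T"
  shows "exp (- (T + 1)\<^sup>2) / 4 \<le> measure M {\<omega>\<in>space M. T \<le> cmod (X \<omega>)}"
proof -
  interpret prob_space M by fact
  note [measurable] = std_complex_gaussian_measurable[OF G]
  let ?c = "complex_of_real (T + 1/2)"
  have "cmod ?c = T + 1/2"
    by (subst norm_of_real) (use \<open>0 \<le> T\<close> in simp)
  then have "exp (- (T + 1)\<^sup>2) / 4 = (1/2)\<^sup>2 * exp (- (cmod ?c + 1/2)\<^sup>2)"
    by (simp add: power2_eq_square add.commute)
  also have "\<dots> \<le> measure M {\<omega>\<in>space M. X \<omega> \<in> ball ?c (1/2)}"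
    by (rule std_complex_gaussian_prob_ball_ge[OF assms(1,2)]) simp
  also have "\<dots> \<le> measure M {\<omega>\<in>space M. T \<le> cmod (X \<omega>)}"
  proof (intro finite_measure_mono subsetI)
    fix \<omega> assume "\<omega> \<in> {\<omega>\<in>space M. X \<omega> \<in> ball ?c (1/2)}"
    then have "Re (?c - X \<omega>) < 1/2" and "\<omega> \<in> space M"
      using abs_Re_le_cmod[of "?c - X \<omega>"] by (auto simp: dist_norm simp del: minus_complex.sel)
    then show "\<omega> \<in> {\<omega>\<in>space M. T \<le> cmod (X \<omega>)}"
      using complex_Re_le_cmod[of "X \<omega>"] by auto
  qed auto
  finally show ?thesis .
qed

lemma std_complex_gaussian_neg_ln_prob_norm_le_small:
  fixes X :: "'w \<Rightarrow> complex"
  assumes "prob_space M" and "std_complex_gaussian M X" and "0 < t" "t \<le> 1"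
  shows "- ln (measure M {\<omega>\<in>space M. cmod (X \<omega>) \<le> t}) \<le> 2 * ln (1 / t) + 1"
proof -
  have "ln (t\<^sup>2 / exp 1) \<le> ln (measure M {\<omega>\<in>space M. cmod (X \<omega>) \<le> t})"
    using std_complex_gaussian_prob_norm_le_ge[OF assms] \<open>0 < t\<close> by (intro ln_mono) auto
  moreover have "ln (t\<^sup>2 / exp 1) = - (2 * ln (1 / t) + 1)"
    using \<open>0 < t\<close> by (simp add: ln_div ln_mult power2_eq_square ln_inverse)
  ultimately show ?thesis by linarith
qed

lemma std_complex_gaussian_neg_ln_prob_norm_le_large:
  fixes X :: "'w \<Rightarrow> complex"
  assumes "prob_space M" and G: "std_complex_gaussian M X" and "3 \<le> t"
  shows "- ln (measure M {\<omega>\<in>space M. cmod (X \<omega>) \<le> t}) \<le> 8 / t\<^sup>2"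
proof -
  interpret prob_space M by fact
  note [measurable] = std_complex_gaussian_measurable[OF G]
  define q where "q = 2 * exp (- t\<^sup>2 / 2)"
  have "9 \<le> t\<^sup>2"
    using power_mono[OF \<open>3 \<le> t\<close>, of 2] by simp
  have "exp (- t\<^sup>2 / 2) = 1 / exp (t\<^sup>2 / 2)"
    by (simp add: exp_minus field_simps)
  also have "\<dots> \<le> 1 / (1 + t\<^sup>2 / 2)"
    by (intro divide_left_mono exp_ge_add_one_self) (auto simp: add_pos_nonneg)
  also have "\<dots> = 2 / (2 + t\<^sup>2)"
    by (simp add: field_simps)
  also have "\<dots> \<le> 2 / t\<^sup>2"
    using \<open>9 \<le> t\<^sup>2\<close> by (intro divide_left_mono) (auto intro!: mult_pos_pos)
  finally have q_le: "q \<le> 4 / t\<^sup>2"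
    by (simp add: q_def)
  have "4 / t\<^sup>2 \<le> 4 / 9"
    using \<open>9 \<le> t\<^sup>2\<close> by (intro divide_left_mono) auto
  then have q: "0 \<le> q" "q \<le> 1/2"
    using q_le by (auto simp: q_def)
  have "1 - q \<le> 1 - measure M {\<omega>\<in>space M. t < cmod (X \<omega>)}"
    using std_complex_gaussian_prob_norm_gt_le[OF assms(1,2)] \<open>3 \<le> t\<close> by (simp add: q_def)
  also have "\<dots> = measure M {\<omega>\<in>space M. cmod (X \<omega>) \<le> t}"
    by (subst prob_compl[symmetric]) (auto intro!: arg_cong[where f = prob])
  finally have "ln (1 - q) \<le> ln (measure M {\<omega>\<in>space M. cmod (X \<omega>) \<le> t})"
    using q by (intro ln_mono) auto
  moreover have "- q - 2 * q\<^sup>2 \<le> ln (1 - q)"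
    using q by (rule ln_one_minus_pos_lower_bound)
  moreover have "q\<^sup>2 \<le> q / 2"
    using q mult_left_mono[OF q(2) q(1)] by (simp add: power2_eq_square)
  ultimately show ?thesis
    using q_le by linarith
qed

lemma std_complex_gaussian_neg_ln_prob_norm_le_one:
  fixes X :: "'w \<Rightarrow> complex"
  assumes "prob_space M" and G: "std_complex_gaussian M X" and "1 \<le> t"
  shows "- ln (measure M {\<omega>\<in>space M. cmod (X \<omega>) \<le> t}) \<le> 1"
proof -
  interpret prob_space M by fact
  note [measurable] = std_complex_gaussian_measurable[OF G]
  have "0 < measure M {\<omega>\<in>space M. cmod (X \<omega>) \<le> 1}"
    by (rule std_complex_gaussian_prob_norm_le_pos[OF assms(1,2)]) simp
  moreover have "measure M {\<omega>\<in>space M. cmod (X \<omega>) \<le> 1} \<le> measure M {\<omega>\<in>space M. cmod (X \<omega>) \<le> t}"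
    using \<open>1 \<le> t\<close> by (intro finite_measure_mono) auto
  ultimately have "- ln (measure M {\<omega>\<in>space M. cmod (X \<omega>) \<le> t}) \<le> - ln (measure M {\<omega>\<in>space M. cmod (X \<omega>) \<le> 1})"
    by simp
  also have "\<dots> \<le> 1"
    using std_complex_gaussian_neg_ln_prob_norm_le_small[OF assms(1,2), of 1] by simp
  finally show ?thesis .
qed

lemma std_complex_gaussian_neg_ln_prob_norm_le:
  fixes X :: "'w \<Rightarrow> complex"
  assumes "prob_space M" and "std_complex_gaussian M X" and "0 < t"
  shows "- ln (measure M {\<omega>\<in>space M. cmod (X \<omega>) \<le> t}) \<le> 16 * ln (1 + 1 / t\<^sup>2)"
proof -
  consider "t \<le> 1" | "1 \<le> t" "t \<le> 3" | "3 \<le> t" by linarith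
  then show ?thesis
  proof cases
    case 1
    have "2 * ln (1 / t) = ln (1 / t\<^sup>2)"
      using \<open>0 < t\<close> by (simp add: ln_div power2_eq_square ln_mult)
    also have "\<dots> \<le> ln (1 + 1 / t\<^sup>2)"
      using \<open>0 < t\<close> by (intro ln_mono) auto
    finally have "2 * ln (1 / t) \<le> ln (1 + 1 / t\<^sup>2)" .
    moreover have "1/4 \<le> ln (1 + 1/2::real)"
      using ln_one_plus_pos_lower_bound[of "1/2::real"] by (simp add: power2_eq_square)
    moreover have "1 \<le> 1 / t\<^sup>2"
      using \<open>0 < t\<close> 1 by (simp add: power_le_one field_simps)
    then have "ln (1 + 1/2) \<le> ln (1 + 1 / t\<^sup>2)"
      by simp
    ultimately show ?thesis
      using std_complex_gaussian_neg_ln_prob_norm_le_small[OF assms 1] by linarith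
  next
    case 2
    have "1/9 \<le> 1 / t\<^sup>2"
      using 2 power_mono[of t 3 2] by (intro divide_left_mono) auto
    then have "ln (1 + 1/9) \<le> ln (1 + 1 / t\<^sup>2)"
      by simp
    moreover have "(1/9) - (1/9)\<^sup>2 \<le> ln (1 + (1/9::real))"
      by (rule ln_one_plus_pos_lower_bound) auto
    ultimately show ?thesis
      using std_complex_gaussian_neg_ln_prob_norm_le_one[OF assms(1,2) 2(1)]
      by (simp add: power2_eq_square)
  next
    case 3
    have "9 \<le> t\<^sup>2"
      using power_mono[OF 3, of 2] by simp
    then have "1 / t\<^sup>2 \<le> 1/9"
      by (intro divide_left_mono) auto
    then have y: "0 \<le> 1 / t\<^sup>2" "1 / t\<^sup>2 \<le> 1/2"
      by auto
    have "(1 / t\<^sup>2)\<^sup>2 \<le> (1 / t\<^sup>2) / 2"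
      using mult_left_mono[OF y(2) y(1)] by (simp add: power2_eq_square)
    with ln_one_plus_pos_lower_bound[OF y(1)] y have "(1 / t\<^sup>2) / 2 \<le> ln (1 + 1 / t\<^sup>2)"
      by linarith
    with std_complex_gaussian_neg_ln_prob_norm_le_large[OF assms(1,2) 3] show ?thesis
      by simp
  qed
qed

lemma std_complex_gaussian_neg_ln_prob_norm_ge_le:
  fixes X :: "'w \<Rightarrow> complex"
  assumes "prob_space M" and "std_complex_gaussian M X" and "0 \<le> T"
  shows "- ln (measure M {\<omega>\<in>space M. T \<le> cmod (X \<omega>)}) \<le> (T + 1)\<^sup>2 + ln 4"
proof -
  have "ln (exp (- (T + 1)\<^sup>2) / 4) \<le> ln (measure M {\<omega>\<in>space M. T \<le> cmod (X \<omega>)})"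
    using std_complex_gaussian_prob_norm_ge_ge[OF assms] by (intro ln_mono) auto
  then show ?thesis
    by (simp add: ln_div)
qed

lemma std_complex_gaussian_neg_ln_prob_norm_le_div_max:
  fixes X :: "'w \<Rightarrow> complex"
  assumes "prob_space M" and "std_complex_gaussian M X" and "0 < \<delta>" "\<delta> \<le> 1" "0 \<le> c"
  shows "- ln (measure M {\<omega>\<in>space M. cmod (X \<omega>) \<le> \<delta> / max c \<delta>})
    \<le> 2 * max 0 (ln c) + 2 * ln (1 / \<delta>) + 1"
proof -
  have "0 < \<delta> / max c \<delta>" "\<delta> / max c \<delta> \<le> 1"
    using assms by auto
  then have "- ln (measure M {\<omega>\<in>space M. cmod (X \<omega>) \<le> \<delta> / max c \<delta>})
      \<le> 2 * ln (1 / (\<delta> / max c \<delta>)) + 1"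
    by (rule std_complex_gaussian_neg_ln_prob_norm_le_small[OF assms(1,2)])
  also have "ln (1 / (\<delta> / max c \<delta>)) = ln (max c \<delta>) + ln (1 / \<delta>)"
    using assms by (simp add: ln_div)
  also have "ln (max c \<delta>) \<le> max 0 (ln c)"
    using assms by (cases "c \<le> \<delta>") (auto simp: max_def intro: order.trans[of _ 0])
  finally show ?thesis
    by simp
qed

lemma std_complex_gaussian_neg_ln_prob_norm_le_exp:
  fixes X :: "'w \<Rightarrow> complex"
  assumes "prob_space M" and "std_complex_gaussian M X" and "0 < \<delta>" "1 \<le> ln (1 / \<delta>)" "0 \<le> x"
  shows "- ln (measure M {\<omega>\<in>space M. cmod (X \<omega>) \<le> \<delta> * exp (x / 2)})
    \<le> 16 * exp 2 * ln (1 / \<delta>) * exp (- x / ln (1 / \<delta>))"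
proof -
  define L where "L = ln (1 / \<delta>)"
  define y where "y = 1 / (\<delta> * exp (x / 2))\<^sup>2"
  have "0 < y"
    using assms by (simp add: y_def)
  have "1 \<le> L"
    using assms by (simp add: L_def)
  have "ln y = 2 * L - x"
    using assms by (simp add: y_def L_def ln_div ln_mult power2_eq_square)
  then have "1 / L * ln y = 2 + - x / L"
    using \<open>1 \<le> L\<close> by (simp add: field_simps)
  then have "y powr (1 / L) = exp 2 * exp (- x / L)"
    using \<open>0 < y\<close> by (simp add: powr_def exp_add[symmetric])
  moreover have "ln (1 + y) \<le> y powr (1 / L) / (1 / L)"
    using \<open>0 < y\<close> \<open>1 \<le> L\<close> by (intro ln_one_plus_le_powr_div) auto
  ultimately have "ln (1 + y) \<le> exp 2 * L * exp (- x / L)"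
    by (simp add: mult_ac)
  then show ?thesis
    using std_complex_gaussian_neg_ln_prob_norm_le[OF assms(1,2), of "\<delta> * exp (x / 2)"] assms
    by (simp add: y_def L_def)
qed

lemma (in prob_space) prob_INT_indep_events_ge:
  fixes A :: "nat \<Rightarrow> 'a set"
  assumes indep: "indep_events A UNIV" and pos: "\<And>n. 0 < prob (A n)"
    and cost: "\<And>m. (\<Sum>n<m. - ln (prob (A n))) \<le> W"
  shows "exp (- W) \<le> prob (\<Inter>n. A n)"
proof -
  have events: "range A \<subseteq> events"
    and product: "\<And>J. J \<noteq> {} \<Longrightarrow> finite J \<Longrightarrow> prob (\<Inter>n\<in>J. A n) = (\<Prod>n\<in>J. prob (A n))"
    using indep by (simp_all add: indep_events_def)
  define D where "D m = (\<Inter>n\<in>{..m}. A n)" for m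
  have "exp (- W) \<le> prob (D m)" for m
  proof -
    have "prob (D m) = (\<Prod>n\<in>{..m}. prob (A n))"
      unfolding D_def by (rule product) auto
    also have "\<dots> = exp (\<Sum>n\<in>{..m}. ln (prob (A n)))"
      using pos by (simp add: exp_sum)
    finally show ?thesis
      using cost[of "Suc m"] by (simp add: sum_negf lessThan_Suc_atMost)
  qed
  moreover have "(\<lambda>m. prob (D m)) \<longlonglongrightarrow> prob (\<Inter>m. D m)"
    using events by (intro finite_Lim_measure_decseq) (auto simp: D_def decseq_def)
  moreover have "(\<Inter>m. D m) = (\<Inter>n. A n)"
    by (auto simp: D_def)
  ultimately show ?thesis
    by (auto intro: LIMSEQ_le_const)
qed

section \<open>The counting function\<close>

lemma mem_Nset_iff: "0 \<le> r \<Longrightarrow> n \<in> Nset a r \<longleftrightarrow> 1 < cmod (a n) * r ^ n"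
proof -
  have "0 < ln x \<longleftrightarrow> 1 < x" if "0 \<le> x" for x :: real
    using that by (cases "x = 0") auto
  then show "0 \<le> r \<Longrightarrow> n \<in> Nset a r \<longleftrightarrow> 1 < cmod (a n) * r ^ n"
    unfolding Nset_def by simp
qed

lemma Nset_mono:
  assumes "0 \<le> r" "r \<le> r'"
  shows "Nset a r \<subseteq> Nset a r'"
proof
  fix n assume "n \<in> Nset a r"
  moreover have "cmod (a n) * r ^ n \<le> cmod (a n) * r' ^ n"
    using assms by (intro mult_left_mono power_mono) auto
  ultimately show "n \<in> Nset a r'"
    using assms by (auto simp: mem_Nset_iff)
qed

lemma finite_Nset:
  assumes "limsup (\<lambda>n. ereal (root n (cmod (a n)))) = 0" and "0 < r"
  shows "finite (Nset a r)"
proof -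
  have "limsup (\<lambda>n. ereal (root n (cmod (a n)))) < ereal (1 / r)"
    using assms by simp
  then have "eventually (\<lambda>n. ereal (root n (cmod (a n))) < ereal (1 / r)) sequentially"
    by (rule Limsup_lessD)
  then obtain n0 where n0: "\<And>n. n \<ge> n0 \<Longrightarrow> root n (cmod (a n)) < 1 / r"
    by (auto simp: eventually_sequentially)
  have "cmod (a n) * r ^ n \<le> 1" if "n \<ge> Suc n0" for n
  proof -
    have "cmod (a n) = root n (cmod (a n)) ^ n"
      using that by (simp add: real_root_pow_pos2)
    also have "\<dots> \<le> (1 / r) ^ n"
      using n0[of n] that by (intro power_mono) (auto simp: real_root_ge_zero)
    finally show ?thesis
      using \<open>0 < r\<close> by (simp add: field_simps)
  qed
  then have "Nset a r \<subseteq> {..n0}"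
    using \<open>0 < r\<close> by (auto simp: mem_Nset_iff) (meson not_le not_less_eq_eq)
  then show ?thesis
    by (rule finite_subset) simp
qed

lemma NN_mono:
  assumes "limsup (\<lambda>n. ereal (root n (cmod (a n)))) = 0" and "0 < r" "r \<le> r'"
  shows "NN a r \<le> NN a r'"
  unfolding NN_def using assms by (intro card_mono finite_Nset Nset_mono) auto

lemma NN_unbounded:
  assumes "infinite {n. a n \<noteq> 0}" and "limsup (\<lambda>n. ereal (root n (cmod (a n)))) = 0"
  shows "\<exists>r\<ge>1. K \<le> NN a r"
proof -
  have "infinite ({n. a n \<noteq> 0} - {0})"
    using assms(1) by simp
  then obtain B where B: "B \<subseteq> {n. a n \<noteq> 0} - {0}" "finite B" "card B = K"
    using infinite_arbitrarily_large by blast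
  define r where "r = 1 + (\<Sum>n\<in>B. 1 / cmod (a n))"
  have "1 \<le> r"
    unfolding r_def by (simp add: sum_nonneg)
  have "B \<subseteq> Nset a r"
  proof
    fix n assume "n \<in> B"
    then have "0 < cmod (a n)" "1 \<le> n"
      using B by auto
    have "1 / cmod (a n) \<le> (\<Sum>n\<in>B. 1 / cmod (a n))"
      using \<open>n \<in> B\<close> B(2) by (intro member_le_sum) auto
    then have "1 \<le> cmod (a n) * (\<Sum>n\<in>B. 1 / cmod (a n))"
      using \<open>0 < cmod (a n)\<close> by (simp add: field_simps)
    then have "1 < cmod (a n) * r"
      using \<open>0 < cmod (a n)\<close> unfolding r_def distrib_left mult_1_right by linarith
    also have "\<dots> \<le> cmod (a n) * r ^ n"
      using \<open>1 \<le> n\<close> \<open>1 \<le> r\<close> by (intro mult_left_mono) (auto intro: order.trans[OF _ power_increasing[of 1]])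
    finally show "n \<in> Nset a r"
      using \<open>1 \<le> r\<close> by (simp add: mem_Nset_iff)
  qed
  then have "K \<le> NN a r"
    unfolding NN_def using B finite_Nset[OF assms(2), of r] \<open>1 \<le> r\<close> by (metis card_mono less_le_trans zero_less_one)
  with \<open>1 \<le> r\<close> show ?thesis
    by blast
qed

lemma coeff_le_exp_outside_Nset:
  assumes "0 < r" "0 < h" "h < 1" "n \<notin> Nset a (r / (1 - h))"
  shows "cmod (a n) * r ^ n \<le> exp (- (real n * h))"
proof -
  have "cmod (a n) * (r / (1 - h)) ^ n \<le> 1"
    using assms by (simp add: mem_Nset_iff not_less)
  then have "cmod (a n) * r ^ n \<le> (1 - h) ^ n"
    using assms by (simp add: power_divide field_simps)
  also have "\<dots> \<le> exp (- h) ^ n"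
    using assms exp_ge_add_one_self[of "- h"] by (intro power_mono) auto
  finally show ?thesis
    by (simp add: exp_of_nat_mult[symmetric])
qed

lemma ss_eq_sum_max_ln:
  assumes "finite S" "Nset a r \<subseteq> S"
  shows "ss a r = 2 * (\<Sum>n\<in>S. max 0 (ln (cmod (a n) * r ^ n)))"
proof -
  have "(\<Sum>n\<in>S. max 0 (ln (cmod (a n) * r ^ n))) = (\<Sum>n\<in>Nset a r. ln (cmod (a n) * r ^ n))"
    using assms by (intro sum.mono_neutral_cong_right) (auto simp: Nset_def)
  then show ?thesis
    by (simp add: ss_def)
qed

section \<open>Logarithmic measure and a Borel-type lemma\<close>

definition logarithmic_measure :: "real measure" where
  "logarithmic_measure = density lborel (\<lambda>r. ennreal (1 / r))"

lemma sets_logarithmic_measure [simp, measurable_cong]: "sets logarithmic_measure = sets borel"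
  by (simp add: logarithmic_measure_def)

lemma finite_log_measure_iff:
  assumes "E \<subseteq> {0<..}"
  shows "finite_log_measure E \<longleftrightarrow> E \<in> sets borel \<and> emeasure logarithmic_measure E < \<infinity>"
proof -
  have "(\<integral>\<^sup>+ r. indicator E r / ennreal r \<partial>lborel) = (\<integral>\<^sup>+ r. ennreal (1 / r) * indicator E r \<partial>lborel)"
    using assms by (intro nn_integral_cong) (auto simp: indicator_def divide_ennreal[symmetric])
  then show ?thesis
    by (auto simp: finite_log_measure_def logarithmic_measure_def emeasure_density)
qed

lemma emeasure_logarithmic_measure_atLeastAtMost_le:
  assumes "0 < c"
  shows "emeasure logarithmic_measure {c..b} \<le> ennreal ((b - c) / c)"
proof (cases "c \<le> b")
  case True
  have "emeasure logarithmic_measure {c..b} = (\<integral>\<^sup>+ r. ennreal (1 / r) * indicator {c..b} r \<partial>lborel)"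
    by (simp add: logarithmic_measure_def emeasure_density)
  also have "\<dots> \<le> (\<integral>\<^sup>+ r. ennreal (1 / c) * indicator {c..b} r \<partial>lborel)"
    using assms by (intro nn_integral_mono) (auto simp: indicator_def intro!: ennreal_leI divide_left_mono)
  also have "\<dots> = ennreal (1 / c) * ennreal (b - c)"
    using True by (simp add: nn_integral_cmult_indicator)
  also have "\<dots> = ennreal ((b - c) / c)"
    using True assms by (subst ennreal_mult[symmetric]) auto
  finally show ?thesis .
qed simp

text \<open>Intervals \<open>[b\<^sub>k (1 - d\<^sub>k), b\<^sub>k]\<close> have logarithmic measure at most \<open>2 d\<^sub>k\<close>.\<close>
lemma emeasure_logarithmic_measure_UN_shrinking_intervals:
  assumes "\<And>k. 0 < b k" "\<And>k. 0 \<le> d k" "\<And>k. d k \<le> 1/2" "summable d"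
  shows "emeasure logarithmic_measure (\<Union>k. {b k * (1 - d k) .. b k}) < \<infinity>"
proof -
  have "emeasure logarithmic_measure (\<Union>k. {b k * (1 - d k) .. b k})
      \<le> (\<Sum>k. emeasure logarithmic_measure {b k * (1 - d k) .. b k})"
    by (intro emeasure_subadditive_countably) auto
  also have "\<dots> \<le> (\<Sum>k. ennreal (2 * d k))"
  proof (intro suminf_le)
    fix k
    have "0 < b k * (1 - d k)"
      using assms(1,3)[of k] by (intro mult_pos_pos) auto
    then have "emeasure logarithmic_measure {b k * (1 - d k) .. b k}
        \<le> ennreal ((b k - b k * (1 - d k)) / (b k * (1 - d k)))"
      by (rule emeasure_logarithmic_measure_atLeastAtMost_le)
    also have "(b k - b k * (1 - d k)) / (b k * (1 - d k)) \<le> 2 * d k"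
      using assms(1,2,3)[of k] mult_left_mono[of "2 * d k" 1 "d k"] by (simp add: field_simps)
    finally show "emeasure logarithmic_measure {b k * (1 - d k) .. b k} \<le> ennreal (2 * d k)"
      by (simp add: ennreal_leI)
  qed auto
  also have "\<dots> < \<infinity>"
    using assms(2,4) by (simp add: ennreal_suminf_neq_top less_top)
  finally show ?thesis .
qed

definition level_radius :: "(real \<Rightarrow> nat) \<Rightarrow> nat \<Rightarrow> real" where
  "level_radius Nf K = Inf {\<rho>. 1 \<le> \<rho> \<and> K \<le> Nf \<rho>}"

lemma
  assumes "1 \<le> \<rho>" "K \<le> Nf \<rho>"
  shows one_le_level_radius: "1 \<le> level_radius Nf K"
    and level_radius_le: "level_radius Nf K \<le> \<rho>"
  using assms unfolding level_radius_def
  by (auto intro!: cInf_greatest cInf_lower bdd_belowI[of _ 1])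

lemma le_level_radius:
  assumes mono: "mono_on {1..} Nf"
    and "\<exists>\<rho>\<ge>1. K \<le> Nf \<rho>" "Nf r < K"
  shows "r \<le> level_radius Nf K"
  unfolding level_radius_def
proof (rule cInf_greatest)
  show "{\<rho>. 1 \<le> \<rho> \<and> K \<le> Nf \<rho>} \<noteq> {}"
    using assms(2) by auto
  show "r \<le> \<rho>" if "\<rho> \<in> {\<rho>. 1 \<le> \<rho> \<and> K \<le> Nf \<rho>}" for \<rho>
    using that mono_onD[OF mono, of \<rho> r] \<open>Nf r < K\<close> by (cases "\<rho> \<le> r") auto
qed

lemma finite_log_measure_shrinking_intervals:
  assumes "\<And>k. 1 \<le> b k"
  shows "finite_log_measure (({1..R} \<union> (\<Union>k. {b k * (1 - (1/2) ^ Suc k) .. b k})) \<inter> {1<..})"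
proof -
  define F where "F = {1..R} \<union> (\<Union>k. {b k * (1 - (1/2) ^ Suc k) .. b k})"
  have "F \<in> sets borel"
    by (simp add: F_def)
  have "emeasure logarithmic_measure (F \<inter> {1<..}) \<le> emeasure logarithmic_measure F"
    using \<open>F \<in> sets borel\<close> by (intro emeasure_mono) simp_all
  also have "\<dots> \<le> emeasure logarithmic_measure {1..R}
      + emeasure logarithmic_measure (\<Union>k. {b k * (1 - (1/2) ^ Suc k) .. b k})"
    unfolding F_def by (intro emeasure_subadditive) simp_all
  also have "\<dots> < \<infinity>"
  proof -
    have "emeasure logarithmic_measure {1..R} < \<infinity>"
      using emeasure_logarithmic_measure_atLeastAtMost_le[of 1 R] by (simp add: order.strict_trans1)
    moreover have "emeasure logarithmic_measure (\<Union>k. {b k * (1 - (1/2) ^ Suc k) .. b k}) < \<infinity>"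
      using assms less_le_trans[OF zero_less_one assms]
      by (intro emeasure_logarithmic_measure_UN_shrinking_intervals) (simp_all add: power_le_one)
    ultimately show ?thesis
      by (simp add: less_top)
  qed
  finally show ?thesis
    using \<open>F \<in> sets borel\<close> by (subst finite_log_measure_iff) (auto simp: F_def)
qed

lemma mem_interval_below_level_radius:
  assumes mono: "mono_on {1..} Nf" and unbounded: "\<And>K. \<exists>r\<ge>1. K \<le> Nf r"
    and "1 \<le> r" "Nf r < 2 ^ (k + 2)" "2 ^ (k + 3) \<le> Nf (r / (1 - (1/2) ^ Suc k))"
  defines "\<beta> \<equiv> level_radius Nf (2 ^ (k + 3))"
  shows "r \<in> {\<beta> * (1 - (1/2) ^ Suc k) .. \<beta>}"
proof -
  define h :: real where "h = (1/2) ^ Suc k"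
  have "0 < h" "h \<le> 1/2"
    by (auto simp: h_def power_le_one)
  then have "r \<le> r / (1 - h)"
    using \<open>1 \<le> r\<close> by (simp add: field_simps)
  then have "\<beta> \<le> r / (1 - h)"
    unfolding \<beta>_def h_def using assms by (intro level_radius_le) simp_all
  then have "\<beta> * (1 - h) \<le> r"
    using \<open>h \<le> 1/2\<close> by (simp add: pos_le_divide_eq)
  moreover have "Nf r < 2 ^ (k + 3)"
    using \<open>Nf r < 2 ^ (k + 2)\<close> power_increasing[of "k + 2" "k + 3" "2::nat"] by linarith
  then have "r \<le> \<beta>"
    unfolding \<beta>_def by (rule le_level_radius[OF mono unbounded])
  ultimately show ?thesis
    by (simp add: h_def)
qed

lemma regular_growth_outside_finite_log_measure:
  fixes Nf :: "real \<Rightarrow> nat"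
  assumes mono: "mono_on {1..} Nf"
    and unbounded: "\<And>K. \<exists>r\<ge>1. K \<le> Nf r" and "2 \<le> N0"
  shows "\<exists>E. E \<subseteq> {1<..} \<and> finite_log_measure E \<and>
     (\<forall>r\<in>{1<..} - E. N0 \<le> Nf r \<and>
        (\<exists>h. 0 < h \<and> h \<le> 1/2 \<and> 1/h \<le> real (Nf r) \<and> Nf (r / (1 - h)) \<le> 4 * Nf r))"
proof -
  obtain R where "1 \<le> R" "N0 \<le> Nf R"
    using unbounded by blast
  define \<beta> where "\<beta> k = level_radius Nf (2 ^ (k + 3))" for k
  define E where "E = ({1..R} \<union> (\<Union>k. {\<beta> k * (1 - (1/2) ^ Suc k) .. \<beta> k})) \<inter> {1<..}"
  have "finite_log_measure E"
    unfolding E_def using unbounded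
    by (intro finite_log_measure_shrinking_intervals) (auto simp: \<beta>_def intro: one_le_level_radius)
  moreover have "N0 \<le> Nf r \<and>
      (\<exists>h. 0 < h \<and> h \<le> 1/2 \<and> 1/h \<le> real (Nf r) \<and> Nf (r / (1 - h)) \<le> 4 * Nf r)"
    if r: "r \<in> {1<..} - E" for r
  proof -
    have "R < r" and r_notin: "\<And>k. r \<notin> {\<beta> k * (1 - (1/2) ^ Suc k) .. \<beta> k}"
      using r by (auto simp: E_def)
    then have "N0 \<le> Nf r"
      using mono_onD[OF mono, of R r] \<open>1 \<le> R\<close> \<open>N0 \<le> Nf R\<close> by simp
    then obtain n where n: "2 ^ n \<le> Nf r" "Nf r < 2 ^ (n + 1)"
      using ex_power_ivl1[of 2 "Nf r"] \<open>2 \<le> N0\<close> by auto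
    then obtain k where k: "n = Suc k"
      using \<open>2 \<le> N0\<close> \<open>N0 \<le> Nf r\<close> by (cases n) auto
    have "Nf (r / (1 - (1/2) ^ Suc k)) < 2 ^ (k + 3)"
      using mem_interval_below_level_radius[OF mono unbounded, of r k] r_notin[of k] n(2) r
      by (force simp: k \<beta>_def)
    then have "Nf (r / (1 - (1/2) ^ Suc k)) \<le> 4 * Nf r"
      using n(1) by (simp add: k power_add)
    moreover have "1 / (1/2) ^ Suc k \<le> real (Nf r)"
      using n(1) of_nat_le_iff[of "2 ^ n" "Nf r", where 'a = real] by (simp add: k power_one_over)
    moreover have "0 < (1/2::real) ^ Suc k" "(1/2::real) ^ Suc k \<le> 1/2"
      by (auto simp: power_le_one)
    ultimately show ?thesis
      using \<open>N0 \<le> Nf r\<close> by blast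
  qed
  moreover have "E \<subseteq> {1<..}"
    by (simp add: E_def)
  ultimately show ?thesis
    by blast
qed

section \<open>A zero-free event\<close>

lemma gaf_nonzero_if_head_dominates:
  fixes t :: "nat \<Rightarrow> real"
  assumes head: "2 \<le> cmod (\<xi> 0 \<omega> * a 0)" and tail: "\<And>n. cmod (\<xi> (Suc n) \<omega>) \<le> t (Suc n)"
    and "0 \<le> t 0" "summable (\<lambda>n. t n * (cmod (a n) * r ^ n))" "(\<Sum>n. t n * (cmod (a n) * r ^ n)) \<le> 1"
    and "cmod z < r"
  shows "gaf a \<xi> \<omega> z \<noteq> 0"
  unfolding gaf_def
proof (rule suminf_nonzero_if_head_dominates)
  define c where "c = (\<lambda>n. t n * (cmod (a n) * r ^ n))"
  have bound: "norm (\<xi> (Suc n) \<omega> * a (Suc n) * z ^ Suc n) \<le> c (Suc n)" for n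
  proof -
    have "cmod z ^ Suc n \<le> r ^ Suc n"
      using \<open>cmod z < r\<close> by (intro power_mono) auto
    moreover have "0 \<le> t (Suc n)"
      using tail[of n] norm_ge_zero order_trans by blast
    ultimately have "cmod (\<xi> (Suc n) \<omega>) * (cmod (a (Suc n)) * cmod z ^ Suc n) \<le> c (Suc n)"
      unfolding c_def using tail[of n] by (intro mult_mono mult_left_mono) auto
    then show ?thesis
      by (simp add: norm_mult norm_power mult.assoc)
  qed
  have "summable c"
    unfolding c_def by fact
  then have summable: "summable (\<lambda>n. c (Suc n))"
    by (simp only: summable_Suc_iff)
  then show "summable (\<lambda>n. norm (\<xi> (Suc n) \<omega> * a (Suc n) * z ^ Suc n))"
    by (rule summable_comparison_test'[where N = 0]) (simp add: bound del: power_Suc)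
  then have "(\<Sum>n. norm (\<xi> (Suc n) \<omega> * a (Suc n) * z ^ Suc n)) \<le> (\<Sum>n. c (Suc n))"
    using summable bound by (intro suminf_le) auto
  also have "\<dots> = (\<Sum>n. c n) - c 0"
    using \<open>summable c\<close> by (rule suminf_split_head)
  also have "\<dots> < 2"
  proof -
    have "0 \<le> c 0"
      using \<open>0 \<le> t 0\<close> by (simp add: c_def)
    then show ?thesis
      using assms(5) unfolding c_def by linarith
  qed
  also have "2 \<le> norm (\<xi> 0 \<omega> * a 0 * z ^ 0)"
    using head by simp
  finally show "(\<Sum>n. norm (\<xi> (Suc n) \<omega> * a (Suc n) * z ^ Suc n)) < norm (\<xi> 0 \<omega> * a 0 * z ^ 0)" .
qed

text \<open>The set \<open>B\<close> need not be measurable; its measure is then \<open>0\<close> and \<open>- ln 0 = 0\<close>.\<close>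
lemma (in prob_space) neg_ln_prob_le_of_subset:
  assumes "A \<in> events" "A \<subseteq> B" "exp (- C) \<le> prob A" "0 \<le> C"
  shows "- ln (prob B) \<le> C"
proof (cases "B \<in> events")
  case True
  then have "exp (- C) \<le> prob B"
    using assms by (meson finite_measure_mono order_trans)
  then have "ln (exp (- C)) \<le> ln (prob B)"
    by (intro ln_mono) auto
  then show ?thesis
    by simp
qed (simp add: measure_notin_sets \<open>0 \<le> C\<close>)

lemma prob_head_large_tail_small_ge:
  fixes M :: "'w measure" and \<xi> :: "nat \<Rightarrow> 'w \<Rightarrow> complex" and t :: "nat \<Rightarrow> real"
  assumes P: "prob_space M" and I: "prob_space.indep_vars M (\<lambda>_. borel) \<xi> UNIV"
    and G: "\<And>n. std_complex_gaussian M (\<xi> n)" and "0 \<le> T" and t_pos: "\<And>n. 0 < t n"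
    and cost: "\<And>m. (\<Sum>n<m. - ln (measure M {\<omega>\<in>space M. cmod (\<xi> (Suc n) \<omega>) \<le> t (Suc n)})) \<le> W"
  shows "exp (- ((T + 1)\<^sup>2 + ln 4 + W))
    \<le> measure M {\<omega>\<in>space M. T \<le> cmod (\<xi> 0 \<omega>) \<and> (\<forall>n. cmod (\<xi> (Suc n) \<omega>) \<le> t (Suc n))}"
proof -
  interpret prob_space M by fact
  define S where "S n = (if n = 0 then {z. T \<le> cmod z} else {z. cmod z \<le> t n})" for n
  define A where "A n = {\<omega>\<in>space M. \<xi> n \<omega> \<in> S n}" for n
  have A_0: "A 0 = {\<omega>\<in>space M. T \<le> cmod (\<xi> 0 \<omega>)}"
    and A_Suc: "A (Suc n) = {\<omega>\<in>space M. cmod (\<xi> (Suc n) \<omega>) \<le> t (Suc n)}" for n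
    by (simp_all add: A_def S_def)
  have "indep_events A UNIV"
    unfolding A_def using I by (intro indep_eventsI_indep_vars) (auto simp: S_def)
  moreover have "0 < prob (A n)" for n
  proof (cases n)
    case 0
    have "0 < exp (- (T + 1)\<^sup>2) / 4"
      by simp
    also have "\<dots> \<le> prob (A n)"
      using std_complex_gaussian_prob_norm_ge_ge[OF P G \<open>0 \<le> T\<close>] by (simp add: 0 A_0)
    finally show ?thesis .
  qed (simp add: A_Suc std_complex_gaussian_prob_norm_le_pos[OF P G t_pos])
  moreover have "(\<Sum>n<m. - ln (prob (A n))) \<le> (T + 1)\<^sup>2 + ln 4 + W" for m
  proof (cases m)
    case 0
    then show ?thesis
      using cost[of 0] by (simp add: add_nonneg_nonneg)
  next
    case (Suc k)
    have "- ln (prob (A 0)) \<le> (T + 1)\<^sup>2 + ln 4"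
      using std_complex_gaussian_neg_ln_prob_norm_ge_le[OF P G \<open>0 \<le> T\<close>] by (simp add: A_0)
    then show ?thesis
      using cost[of k] by (simp only: Suc sum.lessThan_Suc_shift A_Suc)
  qed
  ultimately have "exp (- ((T + 1)\<^sup>2 + ln 4 + W)) \<le> prob (\<Inter>n. A n)"
    by (rule prob_INT_indep_events_ge)
  also have "(\<Inter>n. A n) = {\<omega>\<in>space M. T \<le> cmod (\<xi> 0 \<omega>) \<and> (\<forall>n. cmod (\<xi> (Suc n) \<omega>) \<le> t (Suc n))}"
  proof (intro equalityI subsetI)
    fix \<omega> assume "\<omega> \<in> (\<Inter>n. A n)"
    then have "\<omega> \<in> A 0" "\<And>n. \<omega> \<in> A (Suc n)"
      by blast+
    then show "\<omega> \<in> {\<omega>\<in>space M. T \<le> cmod (\<xi> 0 \<omega>) \<and> (\<forall>n. cmod (\<xi> (Suc n) \<omega>) \<le> t (Suc n))}"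
      by (simp add: A_0 A_Suc)
  next
    fix \<omega> assume "\<omega> \<in> {\<omega>\<in>space M. T \<le> cmod (\<xi> 0 \<omega>) \<and> (\<forall>n. cmod (\<xi> (Suc n) \<omega>) \<le> t (Suc n))}"
    then have "\<omega> \<in> A n" for n
      by (cases n) (simp_all add: A_0 A_Suc)
    then show "\<omega> \<in> (\<Inter>n. A n)"
      by blast
  qed
  finally show ?thesis .
qed

lemma p0_le_of_dominated_tail:
  fixes M :: "'w measure" and \<xi> :: "nat \<Rightarrow> 'w \<Rightarrow> complex" and t :: "nat \<Rightarrow> real"
  assumes P: "prob_space M" and I: "prob_space.indep_vars M (\<lambda>_. borel) \<xi> UNIV"
    and G: "\<And>n. std_complex_gaussian M (\<xi> n)" and "a 0 \<noteq> 0" "0 < r"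
    and t_pos: "\<And>n. 0 < t n"
    and t_summable: "summable (\<lambda>n. t n * (cmod (a n) * r ^ n))"
    and t_sum: "(\<Sum>n. t n * (cmod (a n) * r ^ n)) \<le> 1"
    and cost: "\<And>m. (\<Sum>n<m. - ln (measure M {\<omega>\<in>space M. cmod (\<xi> (Suc n) \<omega>) \<le> t (Suc n)})) \<le> W"
  shows "p0 M a \<xi> r \<le> (2 / cmod (a 0) + 1)\<^sup>2 + ln 4 + W"
proof -
  interpret prob_space M by fact
  note [measurable] = std_complex_gaussian_measurable[OF G]
  define T where "T = 2 / cmod (a 0)"
  define A where "A = {\<omega>\<in>space M. T \<le> cmod (\<xi> 0 \<omega>) \<and> (\<forall>n. cmod (\<xi> (Suc n) \<omega>) \<le> t (Suc n))}"
  have "A \<subseteq> {\<omega>\<in>space M. \<forall>z. cmod z < r \<longrightarrow> gaf a \<xi> \<omega> z \<noteq> 0}"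
  proof
    fix \<omega> assume "\<omega> \<in> A"
    then have "T * cmod (a 0) \<le> cmod (\<xi> 0 \<omega>) * cmod (a 0)"
      by (intro mult_right_mono) (auto simp: A_def)
    then have "2 \<le> cmod (\<xi> 0 \<omega> * a 0)"
      using \<open>a 0 \<noteq> 0\<close> by (simp add: T_def norm_mult)
    then have "gaf a \<xi> \<omega> z \<noteq> 0" if "cmod z < r" for z
      using \<open>\<omega> \<in> A\<close> t_pos[of 0] t_summable t_sum that
      by (intro gaf_nonzero_if_head_dominates[where t = t and r = r]) (auto simp: A_def)
    then show "\<omega> \<in> {\<omega>\<in>space M. \<forall>z. cmod z < r \<longrightarrow> gaf a \<xi> \<omega> z \<noteq> 0}"
      using \<open>\<omega> \<in> A\<close> by (simp add: A_def)
  qed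
  moreover have "A \<in> events"
    unfolding A_def by measurable
  moreover have "exp (- ((T + 1)\<^sup>2 + ln 4 + W)) \<le> prob A"
    unfolding A_def T_def by (rule prob_head_large_tail_small_ge[OF P I G _ t_pos cost]) simp
  ultimately show ?thesis
    unfolding p0_def T_def using cost[of 0]
    by (intro neg_ln_prob_le_of_subset) auto
qed

text \<open>The radii \<open>t\<^sub>n\<close> of the small-ball events \<open>|\<xi>\<^sub>n| \<le> t\<^sub>n\<close>: coefficients that are large at
  the slightly bigger radius \<open>r / (1 - h)\<close> get \<open>t\<^sub>n |a\<^sub>n| r\<^sup>n \<le> \<delta>\<close>, while the remaining ones decay
  like \<open>e\<^sup>-\<^sup>n\<^sup>h\<close> and may be multiplied by the growing radius \<open>\<delta> e\<^sup>n\<^sup>h\<^sup>/\<^sup>2\<close>.\<close>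
definition small_ball_radius :: "(nat \<Rightarrow> complex) \<Rightarrow> real \<Rightarrow> real \<Rightarrow> real \<Rightarrow> nat \<Rightarrow> real" where
  "small_ball_radius a r h \<delta> n =
     (if n \<in> Nset a (r / (1 - h)) then \<delta> / max (cmod (a n) * r ^ n) \<delta> else \<delta> * exp (real n * h / 2))"

lemma small_ball_radius_pos: "0 < \<delta> \<Longrightarrow> 0 < small_ball_radius a r h \<delta> n"
  by (simp add: small_ball_radius_def)

lemma small_ball_radius_sum:
  assumes "0 < r" "0 < h" "h < 1" "0 < \<delta>" "finite (Nset a (r / (1 - h)))"
  defines "f \<equiv> \<lambda>n. small_ball_radius a r h \<delta> n * (cmod (a n) * r ^ n)"
  shows "summable f" "(\<Sum>n. f n) \<le> \<delta> * (real (card (Nset a (r / (1 - h)))) + 1 + 2 / h)"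
proof -
  have f_in: "f n \<le> \<delta>" if "n \<in> Nset a (r / (1 - h))" for n
    using that \<open>0 < \<delta>\<close> mult_left_mono[of "cmod (a n) * r ^ n" "max (cmod (a n) * r ^ n) \<delta>" \<delta>]
    by (simp add: f_def small_ball_radius_def field_simps)
  have f_out: "f n \<le> \<delta> * exp (- (real n * (h / 2)))" if "n \<notin> Nset a (r / (1 - h))" for n
  proof -
    have "f n \<le> \<delta> * exp (real n * h / 2) * exp (- (real n * h))"
      using that assms coeff_le_exp_outside_Nset[of r h n a]
      by (simp add: f_def small_ball_radius_def mult_left_mono)
    then show ?thesis
      by (simp add: mult.assoc exp_add[symmetric] ac_simps)
  qed
  have f_nonneg: "0 \<le> f n" for n
    using \<open>0 < r\<close> small_ball_radius_pos[OF \<open>0 < \<delta>\<close>] by (simp add: f_def less_imp_le)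
  have "0 < h / 2" "0 \<le> \<delta>"
    using assms by auto
  note bound = sum_bound_finite_plus_geometric[OF assms(5) this f_nonneg f_in f_out]
  show "summable f"
    by (rule bound(1))
  show "(\<Sum>n. f n) \<le> \<delta> * (real (card (Nset a (r / (1 - h)))) + 1 + 2 / h)"
    using bound(2) by simp
qed

lemma small_ball_radius_neg_ln_prob_le:
  fixes X :: "'w \<Rightarrow> complex"
  assumes "prob_space M" and "std_complex_gaussian M X" and "0 < r" "0 < h" "0 < \<delta>" "1 \<le> ln (1 / \<delta>)"
  shows "- ln (measure M {\<omega>\<in>space M. cmod (X \<omega>) \<le> small_ball_radius a r h \<delta> n})
    \<le> (if n \<in> Nset a (r / (1 - h)) then 2 * max 0 (ln (cmod (a n) * r ^ n)) + 2 * ln (1 / \<delta>) + 1 else 0)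
      + 16 * exp 2 * ln (1 / \<delta>) * exp (- (real n * (h / ln (1 / \<delta>))))"
proof (cases "n \<in> Nset a (r / (1 - h))")
  case True
  have "\<delta> \<le> 1"
  proof (rule ccontr)
    assume "\<not> \<delta> \<le> 1"
    then have "ln (1 / \<delta>) < 0"
      by simp
    with assms(6) show False
      by linarith
  qed
  moreover have "0 \<le> 16 * exp 2 * ln (1 / \<delta>) * exp (- (real n * (h / ln (1 / \<delta>))))"
    using assms(6) by simp
  ultimately show ?thesis
    using True std_complex_gaussian_neg_ln_prob_norm_le_div_max[OF assms(1,2,5) \<open>\<delta> \<le> 1\<close>, of "cmod (a n) * r ^ n"]
      \<open>0 < r\<close> by (simp add: small_ball_radius_def)
next
  case False
  then show ?thesis
    using std_complex_gaussian_neg_ln_prob_norm_le_exp[OF assms(1,2,5,6), of "real n * h"] \<open>0 < h\<close>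
    by (simp add: small_ball_radius_def)
qed

lemma small_ball_radius_cost:
  fixes M :: "'w measure" and \<xi> :: "nat \<Rightarrow> 'w \<Rightarrow> complex"
  assumes P: "prob_space M" and G: "\<And>n. std_complex_gaussian M (\<xi> n)"
    and "0 < r" "0 < h" "h \<le> 1/2" "0 < \<delta>" "1 \<le> ln (1 / \<delta>)" "finite (Nset a (r / (1 - h)))"
  shows "(\<Sum>n<m. - ln (measure M {\<omega>\<in>space M. cmod (\<xi> (Suc n) \<omega>) \<le> small_ball_radius a r h \<delta> (Suc n)}))
    \<le> ss a r + card (Nset a (r / (1 - h))) * (2 * ln (1 / \<delta>) + 1) + 32 * exp 2 * (ln (1 / \<delta>))\<^sup>2 / h"
proof -
  define S where "S = Nset a (r / (1 - h))"
  define L where "L = ln (1 / \<delta>)"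
  define q where "q n = 2 * max 0 (ln (cmod (a n) * r ^ n)) + 2 * L + 1" for n
  define e where "e n = 16 * exp 2 * L * exp (- (real n * (h / L)))" for n
  define cost where
    "cost n = - ln (measure M {\<omega>\<in>space M. cmod (\<xi> n \<omega>) \<le> small_ball_radius a r h \<delta> n})" for n
  have "0 < h / L"
    using assms unfolding L_def by (intro divide_pos_pos) linarith+
  have summable: "summable (\<lambda>n. exp (- (real n * (h / L))))"
    using exp_neg_mult_sums[OF \<open>0 < h / L\<close>] by (rule sums_summable)
  have "cost n \<le> (if n \<in> S then q n else 0) + e n" for n
    unfolding cost_def S_def q_def e_def L_def
    by (rule small_ball_radius_neg_ln_prob_le[OF P G \<open>0 < r\<close> \<open>0 < h\<close> \<open>0 < \<delta>\<close> \<open>1 \<le> ln (1 / \<delta>)\<close>])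
  then have "(\<Sum>n<m. cost (Suc n)) \<le> (\<Sum>n\<in>S. q n) + (\<Sum>n. e n)"
    using summable assms(7,8)
    by (intro partial_sums_Suc_le_sum_plus_suminf) (simp_all add: S_def q_def e_def L_def summable_mult)
  also have "(\<Sum>n\<in>S. q n) = ss a r + card S * (2 * L + 1)"
  proof -
    have "Nset a r \<subseteq> S"
      unfolding S_def using assms by (intro Nset_mono) (auto simp: field_simps)
    then show ?thesis
      using \<open>finite (Nset a (r / (1 - h)))\<close>
      by (simp add: q_def S_def sum.distrib ss_eq_sum_max_ln sum_distrib_left distrib_left)
  qed
  also have "(\<Sum>n. e n) = 16 * exp 2 * L * (\<Sum>n. exp (- (real n * (h / L))))"
    using summable by (simp add: e_def suminf_mult)
  also have "\<dots> \<le> 16 * exp 2 * L * (2 * L / h)"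
  proof -
    have "1 + 1 / (h / L) \<le> 2 * L / h"
      using assms by (simp add: L_def field_simps)
    then show ?thesis
      using suminf_exp_neg_mult_le[OF \<open>0 < h / L\<close>] \<open>1 \<le> ln (1 / \<delta>)\<close>
      by (intro mult_left_mono) (auto simp: L_def)
  qed
  finally show ?thesis
    by (simp add: cost_def S_def L_def power2_eq_square field_simps)
qed

lemma p0_le_counting_bound:
  fixes M :: "'w measure" and \<xi> :: "nat \<Rightarrow> 'w \<Rightarrow> complex"
  assumes P: "prob_space M" and I: "prob_space.indep_vars M (\<lambda>_. borel) \<xi> UNIV"
    and G: "\<And>n. std_complex_gaussian M (\<xi> n)" and "a 0 \<noteq> 0"
    and "0 < r" "0 < h" "h \<le> 1/2" "1 \<le> NN a r" "1 / h \<le> real (NN a r)"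
    and fin: "finite (Nset a (r / (1 - h)))" and card: "card (Nset a (r / (1 - h))) \<le> 4 * NN a r"
  defines "N \<equiv> real (NN a r)"
  shows "p0 M a \<xi> r \<le> ss a r + ((2 / cmod (a 0) + 1)\<^sup>2 + ln 4)
    + 4 * N * (2 * ln (7 * N) + 1) + 32 * exp 2 * N * (ln (7 * N))\<^sup>2"
proof -
  define \<delta> where "\<delta> = 1 / (7 * N)"
  define S where "S = Nset a (r / (1 - h))"
  have "1 \<le> N" "0 < \<delta>"
    using assms by (simp_all add: \<delta>_def)
  have "ln (1 / \<delta>) = ln (7 * N)"
    by (simp add: \<delta>_def)
  moreover have "1 \<le> ln (7 * N)"
    using \<open>1 \<le> N\<close> exp_le by (subst ln_ge_iff) linarith+
  ultimately have L: "1 \<le> ln (1 / \<delta>)"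
    by simp
  have "real (card S) \<le> 4 * N" "1 / h \<le> N"
    using card assms by (simp_all add: S_def N_def flip: of_nat_le_iff)
  have "(\<Sum>n. small_ball_radius a r h \<delta> n * (cmod (a n) * r ^ n)) \<le> \<delta> * (real (card S) + 1 + 2 / h)"
    using small_ball_radius_sum(2)[OF \<open>0 < r\<close> \<open>0 < h\<close> _ \<open>0 < \<delta>\<close> fin] assms by (simp add: S_def)
  also have "\<dots> \<le> 1"
    using \<open>real (card S) \<le> 4 * N\<close> \<open>1 / h \<le> N\<close> \<open>1 \<le> N\<close> by (simp add: \<delta>_def field_simps)
  finally have "p0 M a \<xi> r \<le> (2 / cmod (a 0) + 1)\<^sup>2 + ln 4
      + (ss a r + card S * (2 * ln (1 / \<delta>) + 1) + 32 * exp 2 * (ln (1 / \<delta>))\<^sup>2 / h)"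
    using assms small_ball_radius_pos[OF \<open>0 < \<delta>\<close>] small_ball_radius_sum(1)[OF \<open>0 < r\<close> \<open>0 < h\<close> _ \<open>0 < \<delta>\<close> fin]
      small_ball_radius_cost[OF P G \<open>0 < r\<close> \<open>0 < h\<close> \<open>h \<le> 1/2\<close> \<open>0 < \<delta>\<close> L fin]
    by (intro p0_le_of_dominated_tail[OF P I G]) (simp_all add: S_def)
  also have "card S * (2 * ln (1 / \<delta>) + 1) \<le> 4 * N * (2 * ln (7 * N) + 1)"
    unfolding \<open>ln (1 / \<delta>) = ln (7 * N)\<close> using \<open>real (card S) \<le> 4 * N\<close> \<open>1 \<le> ln (7 * N)\<close>
    by (intro mult_right_mono) auto
  also have "32 * exp 2 * (ln (1 / \<delta>))\<^sup>2 / h \<le> 32 * exp 2 * N * (ln (7 * N))\<^sup>2"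
    using \<open>1 / h \<le> N\<close> \<open>0 < h\<close> \<open>ln (1 / \<delta>) = ln (7 * N)\<close>
      mult_left_mono[OF \<open>1 / h \<le> N\<close>, of "32 * exp 2 * (ln (7 * N))\<^sup>2"]
    by (simp add: field_simps)
  finally show ?thesis
    by simp
qed

theorem theorem4p1:
  fixes M :: "'w measure" and \<xi> :: "nat \<Rightarrow> 'w \<Rightarrow> complex"
    and a :: "nat \<Rightarrow> complex" and \<epsilon> :: real
  assumes "\<epsilon> > 0"
    and "prob_space M"
    and "prob_space.indep_vars M (\<lambda>_. borel) \<xi> UNIV"
    and "\<And>n. std_complex_gaussian M (\<xi> n)"
    and "infinite {n. a n \<noteq> 0}"
    and "limsup (\<lambda>n. ereal (root n (cmod (a n)))) = 0"
    and "a 0 \<noteq> 0"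
  shows "\<exists>E. E \<subseteq> {1<..} \<and> finite_log_measure E \<and>
           (\<forall>r \<in> {1<..} - E.
              p0 M a \<xi> r \<le> ss a r + real (NN a r) * exp ((2 + \<epsilon>) * sqrt (ln (real (NN a r)))))"
proof -
  note P = assms(2) and I = assms(3) and G = assms(4) and limsup = assms(6)
  obtain X where X: "\<And>x. X \<le> x \<Longrightarrow> (2 / cmod (a 0) + 1)\<^sup>2 + ln 4 + 4 * x * (2 * ln (7 * x) + 1)
      + 32 * exp 2 * x * (ln (7 * x))\<^sup>2 \<le> x * exp ((2 + \<epsilon>) * sqrt (ln x))"
    using eventually_counting_bound_le[OF \<open>\<epsilon> > 0\<close>] by (auto simp: eventually_at_top_linorder)
  have "mono_on {1..} (NN a)"
    using NN_mono[OF limsup] by (auto intro: mono_onI)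
  then obtain E where "E \<subseteq> {1<..}" "finite_log_measure E" and E: "\<And>r. r \<in> {1<..} - E \<Longrightarrow>
      max 2 (nat \<lceil>X\<rceil>) \<le> NN a r \<and> (\<exists>h. 0 < h \<and> h \<le> 1/2 \<and> 1/h \<le> real (NN a r)
        \<and> NN a (r / (1 - h)) \<le> 4 * NN a r)"
    using regular_growth_outside_finite_log_measure[of "NN a" "max 2 (nat \<lceil>X\<rceil>)"] NN_unbounded[OF assms(5) limsup]
    by auto
  moreover have "p0 M a \<xi> r \<le> ss a r + real (NN a r) * exp ((2 + \<epsilon>) * sqrt (ln (real (NN a r))))"
    if r: "r \<in> {1<..} - E" for r
  proof -
    obtain h where "max 2 (nat \<lceil>X\<rceil>) \<le> NN a r" "0 < h" "h \<le> 1/2" "1/h \<le> real (NN a r)"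
      "NN a (r / (1 - h)) \<le> 4 * NN a r"
      using E[OF r] by blast
    moreover have "0 < r / (1 - h)"
      using r \<open>h \<le> 1/2\<close> by simp
    ultimately show ?thesis
      using p0_le_counting_bound[where a = a and r = r and h = h, OF P I G \<open>a 0 \<noteq> 0\<close>] X[of "real (NN a r)"] r
        finite_Nset[OF limsup, of "r / (1 - h)"]
      by (force simp: NN_def)
  qed
  ultimately show ?thesis
    by blast
qed

end
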